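(* Let $f\in L_{2\pi}$ be complex valued with Fourier coefficients $\hat f(k)=\frac1{2\pi}\int_{-\pi}^{\pi}f(x)e^{-ikx}dx$, and let $\{\psi_n\}_{n\ge1}$ be a decreasing sequence of positive numbers tending to zero with $\psi_n=O(\psi_{2n})$. Suppose $\{\hat f(n)\}_{n\ge0}\in NBVS$ and $\{\hat f(-n)\}_{n\ge0}\in NBVS$, and let $S_n(f,x)=\sum_{k=-n}^n\hat f(k)e^{ikx}$. Then $$\|f-S_n(f)\|_L=O(\psi_n)\quad(n\to\infty)$$ if and only if both $E_n(f)_L=O(\psi_n)$ as $n\to\infty$ and $\hat f(n)\log|n|=O(\psi_{|n|})$ as $|n|\to\infty$.
   Context: For $\theta_0\in[0,\pi/2)$ let $M(\theta_0)=\{z\in\mathbb C: |\arg z|\le\theta_0\}$ (with $0\in M(\theta_0)$). Write $\Delta c_n=c_n-c_{n+1}$. A complex sequence $\mathbf C=\{c_n\}$ belongs to $NBVS$ if there is $\theta_0\in[0,\pi/2)$ with $c_n\in M(\theta_0)$ for all $n\ge1$ and a constant $K(\mathbf C)>0$ such that $\sum_{n=m}^{2m}|\Delta c_n|\le K(\mathbf C)\big(|c_m|+|c_{2m}|\big)$ for all $m\ge1$. $L_{2\pi}$ is the space of complex valued $2\pi$-periodic integrable functions with norm $\|g\|_L=\int_{-\pi}^{\pi}|g(x)|dx$, and $E_n(f)_L=\inf_{a_k\in\mathbb C}\|f-\sum_{k=-n}^na_ke^{ikx}\|_L$. *)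

theory Defs
  imports "HOL-Analysis.Analysis" "HOL-Library.Landau_Symbols"
begin

definition sector :: "real \<Rightarrow> complex set" where
  "sector \<theta>0 = {z. z = 0 \<or> \<bar>Arg z\<bar> \<le> \<theta>0}"

definition NBVS :: "(nat \<Rightarrow> complex) \<Rightarrow> bool" where
  "NBVS c \<longleftrightarrow>
     (\<exists>\<theta>0. 0 \<le> \<theta>0 \<and> \<theta>0 < pi / 2 \<and> (\<forall>n\<ge>1. c n \<in> sector \<theta>0)) \<and>
     (\<exists>K>0. \<forall>m\<ge>1. (\<Sum>n=m..2*m. norm (c n - c (Suc n))) \<le> K * (norm (c m) + norm (c (2*m))))"

definition L_norm :: "(real \<Rightarrow> complex) \<Rightarrow> real" where
  "L_norm g = integral {-pi..pi} (\<lambda>x. norm (g x))"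

definition in_L2pi :: "(real \<Rightarrow> complex) \<Rightarrow> bool" where
  "in_L2pi f \<longleftrightarrow> (\<forall>x. f (x + 2 * pi) = f x) \<and> f absolutely_integrable_on {-pi..pi}"

definition fourier_coeff :: "(real \<Rightarrow> complex) \<Rightarrow> int \<Rightarrow> complex" where
  "fourier_coeff f k = integral {-pi..pi} (\<lambda>x. f x * exp (- \<i> * of_int k * of_real x)) / (2 * pi)"

definition partial_sum :: "(real \<Rightarrow> complex) \<Rightarrow> nat \<Rightarrow> real \<Rightarrow> complex" where
  "partial_sum f n x = (\<Sum>k=-int n..int n. fourier_coeff f k * exp (\<i> * of_int k * of_real x))"

definition best_approx :: "(real \<Rightarrow> complex) \<Rightarrow> nat \<Rightarrow> real" where
  "best_approx f n = (INF a\<in>(UNIV :: (int \<Rightarrow> complex) set).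
      L_norm (\<lambda>x. f x - (\<Sum>k=-int n..int n. a k * exp (\<i> * of_int k * of_real x))))"

end

theory Submission
  imports Defs "HOL-Real_Asymp.Real_Asymp"
begin

text \<open>
  Write c(k) for the Fourier coefficients of f. The conditions are necessary: trivially
  E_n(f) <= ||f - S_n f||, and the remainder g = f - S_p f has no frequencies |k| <= p, so
  integrating g against the bounded kernel e^(ipx) sum_(j<=p) sin(jx)/j shows
  |sum_(j<=p) c(p+j)/j| = O(||g||). Since the coefficients lie in a sector |arg z| <= theta < pi/2,
  this bounds sum_(j<=p) |c(p+j)|/j, and the NBVS condition bounds |c(n)| log n by two such sums
  with p = n div 2; the doubling property of psi leads back from n div 2 to n.

  They are sufficient: the de la Vallee Poussin mean V_n f = 2 sigma_(2n-1) f - sigma_(n-1) f of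
  the Fejer means reproduces trigonometric polynomials of degree n and has norm at most 3, hence
  ||f - V_n f|| <= 4 E_n(f). The difference V_n f - S_n f involves only the frequencies
  n < |k| < 2n; by Abel summation and the NBVS condition it is pointwise
  O((|c(+-n)| + |c(+-2n)|) min(n, 1/|x|)), whose integral is O((|c(+-n)| + |c(+-2n)|) log n).
\<close>

section \<open>Characters and trigonometric polynomials\<close>

definition expi :: "int \<Rightarrow> real \<Rightarrow> complex" where
  "expi k x = exp (\<i> * of_int k * of_real x)"

lemma continuous_on_expi [continuous_intros]: "continuous_on A (expi k)"
  unfolding expi_def by (intro continuous_intros)

lemma expi_eq_cis: "expi k x = cis (of_int k * x)"
  by (simp add: expi_def cis_conv_exp mult.assoc)

lemma norm_expi [simp]: "norm (expi k x) = 1"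
  by (simp add: expi_eq_cis)

lemma expi_0 [simp]: "expi 0 x = 1"
  by (simp add: expi_def)

lemma expi_mult: "expi k x * expi j x = expi (k + j) x"
  by (simp add: expi_eq_cis cis_mult algebra_simps)

lemma expi_minus: "expi (- k) x = expi k (- x)"
  by (simp add: expi_def)

lemma cnj_expi: "cnj (expi k x) = expi (- k) x"
  by (simp add: expi_eq_cis complex_eq_iff)

lemma expi_of_nat: "expi (int j) y = cis y ^ j"
  by (simp add: expi_eq_cis Complex.DeMoivre)

lemma integral_expi: "integral {-pi..pi} (expi k) = (if k = 0 then 2 * pi else 0)"
proof (cases "k = 0")
  case True
  then have "expi k = (\<lambda>_. 1)" by (simp add: fun_eq_iff)
  then show ?thesis using True by (simp add: scaleR_conv_of_real)
next
  case False
  have "(expi k has_integral (expi k pi - expi k (-pi)) / (\<i> * of_int k)) {-pi..pi}"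
  proof -
    have "((\<lambda>x. expi k x / (\<i> * of_int k)) has_vector_derivative expi k x) (at x within {-pi..pi})" for x
    proof -
      have "((\<lambda>z. exp (\<i> * of_int k * z) / (\<i> * of_int k)) has_field_derivative exp (\<i> * of_int k * of_real x)) (at (of_real x))"
        using False by (auto intro!: derivative_eq_intros)
      from has_vector_derivative_real_field[OF this] show ?thesis unfolding expi_def .
    qed
    then show ?thesis
      using fundamental_theorem_of_calculus[of "-pi" pi "\<lambda>x. expi k x / (\<i> * of_int k)" "expi k"]
      by (simp add: diff_divide_distrib)
  qed
  moreover have "expi k pi = expi k (-pi)"
    by (simp add: expi_eq_cis complex_eq_iff mult.commute)
  ultimately show ?thesis using False by (simp add: integral_unique)
qed

lemma fourier_coeff_eq: "fourier_coeff f k = integral {-pi..pi} (\<lambda>x. f x * expi (- k) x) / (2 * pi)"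
  by (simp add: fourier_coeff_def expi_def)

lemma integral_eq_fourier_coeff_0: "integral {-pi..pi} g = 2 * pi * fourier_coeff g 0"
  by (simp add: fourier_coeff_eq)

lemma absolutely_integrable_mult_continuous:
  fixes f h :: "real \<Rightarrow> complex"
  assumes "f absolutely_integrable_on {a..b}" and "continuous_on {a..b} h"
  shows "(\<lambda>x. f x * h x) absolutely_integrable_on {a..b}"
proof -
  have "(\<lambda>x. h x * f x) absolutely_integrable_on {a..b}"
    using assms
    by (intro absolutely_integrable_bounded_measurable_product[OF bilinear_times]
        continuous_imp_measurable_on_sets_lebesgue compact_imp_bounded compact_continuous_image) auto
  then show ?thesis by (simp add: mult.commute)
qed

lemma integrable_mult_expi:
  "f absolutely_integrable_on {-pi..pi} \<Longrightarrow> (\<lambda>x. f x * expi k x) integrable_on {-pi..pi}"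
  by (intro set_lebesgue_integral_eq_integral(1) absolutely_integrable_mult_continuous continuous_on_expi)

lemma fourier_coeff_diff:
  assumes "f absolutely_integrable_on {-pi..pi}" "g absolutely_integrable_on {-pi..pi}"
  shows "fourier_coeff (\<lambda>x. f x - g x) k = fourier_coeff f k - fourier_coeff g k"
proof -
  have "integral {-pi..pi} (\<lambda>x. (f x - g x) * expi (-k) x) =
        integral {-pi..pi} (\<lambda>x. f x * expi (-k) x) - integral {-pi..pi} (\<lambda>x. g x * expi (-k) x)"
    unfolding left_diff_distrib by (intro integral_diff integrable_mult_expi assms)
  then show ?thesis unfolding fourier_coeff_eq by (simp add: diff_divide_distrib)
qed

lemma integral_mult_expi_sum:
  assumes g: "g absolutely_integrable_on {-pi..pi}" and J: "finite J"
  shows "integral {-pi..pi} (\<lambda>x. g x * (\<Sum>j\<in>J. c j * expi (\<kappa> j) x)) =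
    2 * pi * (\<Sum>j\<in>J. c j * fourier_coeff g (- \<kappa> j))"
proof -
  have "integral {-pi..pi} (\<lambda>x. g x * (\<Sum>j\<in>J. c j * expi (\<kappa> j) x)) =
        integral {-pi..pi} (\<lambda>x. \<Sum>j\<in>J. c j * (g x * expi (\<kappa> j) x))"
    by (simp add: sum_distrib_left algebra_simps)
  also have "\<dots> = (\<Sum>j\<in>J. integral {-pi..pi} (\<lambda>x. c j * (g x * expi (\<kappa> j) x)))"
    using J g by (intro integral_sum integrable_on_mult_right integrable_mult_expi)
  also have "\<dots> = (\<Sum>j\<in>J. c j * integral {-pi..pi} (\<lambda>x. g x * expi (\<kappa> j) x))"
    by simp
  finally show ?thesis by (simp add: fourier_coeff_eq sum_distrib_left)
qed

definition trig_poly :: "(int \<Rightarrow> complex) \<Rightarrow> int set \<Rightarrow> real \<Rightarrow> complex" where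
  "trig_poly a A x = (\<Sum>k\<in>A. a k * expi k x)"

lemma continuous_on_trig_poly [continuous_intros]: "continuous_on S (trig_poly a A)"
  unfolding trig_poly_def by (intro continuous_intros)

lemma absolutely_integrable_trig_poly: "trig_poly a A absolutely_integrable_on {-pi..pi}"
  by (intro absolutely_integrable_continuous_real continuous_on_trig_poly)

lemma partial_sum_eq_trig_poly: "partial_sum f n = trig_poly (fourier_coeff f) {-int n..int n}"
  by (simp add: fun_eq_iff partial_sum_def trig_poly_def expi_def)

lemma fourier_coeff_trig_poly:
  assumes "finite A"
  shows "fourier_coeff (trig_poly a A) j = (if j \<in> A then a j else 0)"
proof -
  have "integral {-pi..pi} (\<lambda>x. trig_poly a A x * expi (-j) x) =
        integral {-pi..pi} (\<lambda>x. \<Sum>k\<in>A. a k * expi (k - j) x)"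
    by (simp add: trig_poly_def sum_distrib_right mult.assoc expi_mult)
  also have "\<dots> = (\<Sum>k\<in>A. a k * integral {-pi..pi} (expi (k - j)))"
    using assms by (simp add: integral_sum integrable_on_mult_right integrable_continuous_interval continuous_on_expi)
  also have "\<dots> = (\<Sum>k\<in>A. if k = j then a k * (2 * pi) else 0)"
    by (intro sum.cong) (auto simp: integral_expi)
  finally show ?thesis using assms by (simp add: fourier_coeff_eq)
qed

section \<open>The norm of \<open>L\<^sub>2\<^sub>\<pi>\<close>\<close>

lemma L_norm_nonneg: "L_norm g \<ge> 0"
  by (cases "(\<lambda>x. norm (g x)) integrable_on {-pi..pi}")
    (auto simp: L_norm_def not_integrable_integral intro: integral_nonneg)

lemma L_norm_cmult: "L_norm (\<lambda>x. c * u x) = norm c * L_norm u"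
  by (simp add: L_norm_def norm_mult)

lemma L_norm_diff_le:
  assumes "u absolutely_integrable_on {-pi..pi}" "v absolutely_integrable_on {-pi..pi}"
  shows "L_norm (\<lambda>x. u x - v x) \<le> L_norm u + L_norm v"
proof -
  have "(\<lambda>x. norm (u x)) integrable_on {-pi..pi}" "(\<lambda>x. norm (v x)) integrable_on {-pi..pi}"
    "(\<lambda>x. norm (u x - v x)) integrable_on {-pi..pi}"
    using assms set_integral_diff(1)[OF assms] by (simp_all add: absolutely_integrable_on_def)
  then have "integral {-pi..pi} (\<lambda>x. norm (u x - v x)) \<le> integral {-pi..pi} (\<lambda>x. norm (u x) + norm (v x))"
    by (intro integral_le integrable_add norm_triangle_ineq4)
  also have "\<dots> = L_norm u + L_norm v"
    unfolding L_norm_def by (intro integral_add) fact+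
  finally show ?thesis unfolding L_norm_def .
qed

lemma L_norm_le_integral:
  assumes "u absolutely_integrable_on {-pi..pi}" "h integrable_on {-pi..pi}"
    and "\<And>x. x \<in> {-pi..pi} \<Longrightarrow> norm (u x) \<le> h x"
  shows "L_norm u \<le> integral {-pi..pi} h"
  using assms unfolding L_norm_def absolutely_integrable_on_def by (intro integral_le) auto

lemma norm_integral_mult_le_L_norm:
  assumes g: "g absolutely_integrable_on {-pi..pi}" and h: "continuous_on {-pi..pi} h"
    and B: "\<And>x. x \<in> {-pi..pi} \<Longrightarrow> norm (h x) \<le> B"
  shows "norm (integral {-pi..pi} (\<lambda>x. g x * h x)) \<le> B * L_norm g"
proof -
  have "norm (integral {-pi..pi} (\<lambda>x. g x * h x)) \<le> integral {-pi..pi} (\<lambda>x. B * norm (g x))"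
  proof (rule integral_norm_bound_integral)
    show "(\<lambda>x. g x * h x) integrable_on {-pi..pi}"
      by (intro set_lebesgue_integral_eq_integral(1) absolutely_integrable_mult_continuous g h)
    show "(\<lambda>x. B * norm (g x)) integrable_on {-pi..pi}"
      using g by (intro integrable_on_mult_right) (simp add: absolutely_integrable_on_def)
    show "norm (g x * h x) \<le> B * norm (g x)" if "x \<in> {-pi..pi}" for x
      using B[OF that] by (simp add: norm_mult) (metis mult.commute mult_left_mono norm_ge_zero)
  qed
  then show ?thesis by (simp add: L_norm_def)
qed

lemma has_integral_Re_integral:
  "f integrable_on A \<Longrightarrow> ((\<lambda>x. Re (f x)) has_integral Re (integral A f)) A"
  by (intro has_integral_Re integrable_integral)

lemma best_approx_le_partial_sum_error: "best_approx f n \<le> L_norm (\<lambda>x. f x - partial_sum f n x)"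
  unfolding best_approx_def partial_sum_def
  by (rule cINF_lower[where x="fourier_coeff f"]) (auto intro!: bdd_belowI2 L_norm_nonneg)

lemma best_approx_nonneg: "0 \<le> best_approx f n"
  unfolding best_approx_def by (rule cINF_greatest) (auto intro: L_norm_nonneg)

section \<open>Exponential sums and sums of sines\<close>

lemma sin_ge_quarter:
  assumes "0 \<le> t" "t \<le> pi / 2"
  shows "t / 4 \<le> sin t"
proof (cases "t \<le> pi / 3")
  case True
  have "t / 2 \<le> sin t" if "0 < t"
  proof -
    obtain z where z: "0 < z" "z < t" "sin t - sin 0 = (t - 0) * cos z"
      using MVT2[OF \<open>0 < t\<close>, of sin cos] by (auto intro: DERIV_sin)
    have "1 / 2 \<le> cos z"
      using cos_monotone_0_pi_le[of z "pi / 3"] z True by (simp add: cos_60)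
    then show ?thesis using z \<open>0 < t\<close> by (simp add: mult_left_mono)
  qed
  then show ?thesis using assms by (cases "t = 0") auto
next
  case False
  then have "sqrt 3 / 2 \<le> sin t"
    using assms sin_mono_le_eq[of "pi / 3" t] by (simp add: sin_60)
  moreover have "1 \<le> sqrt 3" "t / 4 \<le> 1 / 2"
    using assms pi_less_4 by auto
  ultimately show ?thesis by linarith
qed

lemma norm_one_minus_cis_ge:
  assumes "\<bar>y\<bar> \<le> pi"
  shows "\<bar>y\<bar> / 4 \<le> norm (1 - cis y)"
proof -
  have "(norm (1 - cis y))\<^sup>2 = (1 - cos y)\<^sup>2 + (sin y)\<^sup>2"
    by (simp add: cmod_power2)
  also have "\<dots> = 2 - 2 * cos y"
    using sin_cos_squared_add[of y] by (simp add: power2_eq_square algebra_simps)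
  also have "\<dots> = (2 * sin (y / 2))\<^sup>2"
    using cos_double_sin[of "y / 2"] by (simp add: power2_eq_square)
  finally have "(norm (1 - cis y))\<^sup>2 = (2 * sin (y / 2))\<^sup>2" .
  then have "norm (1 - cis y) = 2 * \<bar>sin (y / 2)\<bar>"
    by (metis abs_mult abs_numeral power2_abs power2_eq_iff_nonneg norm_ge_zero abs_ge_zero zero_le_mult_iff zero_le_numeral)
  moreover have "\<bar>y\<bar> / 8 \<le> \<bar>sin (y / 2)\<bar>"
    using sin_ge_quarter[of "\<bar>y\<bar> / 2"] assms by (cases "y \<ge> 0") auto
  ultimately show ?thesis by simp
qed

lemma norm_sum_expi_le:
  assumes "\<bar>y\<bar> \<le> pi" "y \<noteq> 0"
  shows "norm (\<Sum>l=a..b. expi (int l) y) \<le> 8 / \<bar>y\<bar>"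
proof -
  define z where "z = cis y"
  have z: "\<bar>y\<bar> / 4 \<le> norm (1 - z)"
    unfolding z_def by (rule norm_one_minus_cis_ge[OF assms(1)])
  then have "0 < norm (1 - z)" using assms by linarith
  then have "z \<noteq> 1" by auto
  have "norm (z ^ a) = 1" "norm (z ^ Suc b) = 1"
    by (simp_all only: z_def norm_power norm_cis power_one)
  then have "norm (z ^ a - z ^ Suc b) \<le> 2"
    using norm_triangle_ineq4[of "z ^ a" "z ^ Suc b"] by linarith
  then have "norm (\<Sum>l=a..b. z ^ l) \<le> 2 / norm (1 - z)"
    using \<open>z \<noteq> 1\<close> by (simp add: sum_gp norm_divide divide_right_mono)
  also have "\<dots> \<le> 2 / (\<bar>y\<bar> / 4)"
    using z assms \<open>0 < norm (1 - z)\<close> by (intro divide_left_mono) auto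
  finally show ?thesis by (simp add: expi_of_nat z_def)
qed

lemma norm_sum_expi_le_max:
  assumes "\<bar>y\<bar> \<le> pi" "1 \<le> n" "k \<le> 2 * n"
  shows "norm (\<Sum>l=Suc n..k. expi (int l) y) \<le> 8 / max \<bar>y\<bar> (1 / real n)"
proof (cases "1 / real n \<le> \<bar>y\<bar>")
  case True
  then have "y \<noteq> 0" using assms(2) by auto
  then show ?thesis using True norm_sum_expi_le[OF assms(1)] by (simp add: max_def)
next
  case False
  have "norm (\<Sum>l=Suc n..k. expi (int l) y) \<le> real (k - n)"
    using norm_sum[of "\<lambda>l. expi (int l) y" "{Suc n..k}"] by simp
  also have "\<dots> \<le> 8 / (1 / real n)"
    using assms by simp
  finally show ?thesis using False by (simp add: max_def)
qed

lemma sum_by_parts: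
  fixes u v :: "nat \<Rightarrow> 'a::ring"
  assumes "a \<le> b"
  shows "(\<Sum>k=a..b. u k * v k) =
    u b * (\<Sum>l=a..b. v l) + (\<Sum>k=a..<b. (u k - u (Suc k)) * (\<Sum>l=a..k. v l))"
  using assms
proof (induction b rule: dec_induct)
  case (step b)
  then show ?case by (simp add: algebra_simps)
qed simp

lemma norm_sum_by_parts_le:
  fixes u v :: "nat \<Rightarrow> 'a::real_normed_algebra"
  assumes "a \<le> b" and M: "\<And>k. a \<le> k \<Longrightarrow> k \<le> b \<Longrightarrow> norm (\<Sum>l=a..k. v l) \<le> M"
  shows "norm (\<Sum>k=a..b. u k * v k) \<le> (norm (u b) + (\<Sum>k=a..<b. norm (u k - u (Suc k)))) * M"
proof -
  have "norm (\<Sum>k=a..b. u k * v k) \<le>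
      norm (u b) * norm (\<Sum>l=a..b. v l) + (\<Sum>k=a..<b. norm (u k - u (Suc k)) * norm (\<Sum>l=a..k. v l))"
    unfolding sum_by_parts[OF assms(1)]
    by (intro order_trans[OF norm_triangle_ineq] add_mono norm_mult_ineq
        order_trans[OF norm_sum] sum_mono)
  also have "\<dots> \<le> norm (u b) * M + (\<Sum>k=a..<b. norm (u k - u (Suc k)) * M)"
    using assms by (intro add_mono mult_left_mono sum_mono) auto
  finally show ?thesis by (simp add: distrib_right sum_distrib_right)
qed

lemma abs_sum_sin_div_tail_le:
  assumes "\<bar>y\<bar> \<le> pi" "y \<noteq> 0" "1 \<le> a"
  shows "\<bar>\<Sum>j=a..b. sin (real j * y) / real j\<bar> \<le> 8 / (real a * \<bar>y\<bar>)"
proof (cases "a \<le> b")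
  case True
  have partial: "norm (\<Sum>l=a..k. sin (real l * y)) \<le> 8 / \<bar>y\<bar>" for k
  proof -
    have "(\<Sum>l=a..k. sin (real l * y)) = Im (\<Sum>l=a..k. expi (int l) y)"
      by (simp add: Im_sum expi_eq_cis)
    then show ?thesis
      using abs_Im_le_cmod norm_sum_expi_le[OF assms(1,2)] by (metis order_trans real_norm_def)
  qed
  have variation: "norm (1 / real b) + (\<Sum>k=a..<b. norm (1 / real k - 1 / real (Suc k))) = 1 / real a"
  proof -
    have "(\<Sum>k=a..<b. norm (1 / real k - 1 / real (Suc k))) = (\<Sum>k=a..<b. 1 / real k - 1 / real (Suc k))"
      using assms by (intro sum.cong) (auto simp: frac_le)
    also have "\<dots> = 1 / real a - 1 / real b"
      using sum_Suc_diff'[OF True, of "\<lambda>k. - 1 / real k"] by (simp add: algebra_simps)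
    finally show ?thesis by simp
  qed
  have "\<bar>\<Sum>j=a..b. sin (real j * y) / real j\<bar> = norm (\<Sum>j=a..b. (1 / real j) * sin (real j * y))"
    by simp
  also have "\<dots> \<le> 1 / real a * (8 / \<bar>y\<bar>)"
    using norm_sum_by_parts_le[OF True partial, of "\<lambda>j. 1 / real j"] by (simp only: variation)
  finally show ?thesis by simp
qed (use assms in simp)

lemma abs_sum_sin_div_le:
  assumes "\<bar>y\<bar> \<le> pi"
  shows "\<bar>\<Sum>j=1..p. sin (real j * y) / real j\<bar> \<le> pi + 4"
proof (cases "y = 0")
  case False
  define m where "m = nat \<lfloor>pi / \<bar>y\<bar>\<rfloor>"
  have "real m \<le> pi / \<bar>y\<bar>" "pi / \<bar>y\<bar> < real m + 1"
    by (simp_all add: m_def of_nat_nat)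
  then have m: "real m * \<bar>y\<bar> \<le> pi" "pi < real (Suc m) * \<bar>y\<bar>"
    using False by (simp_all add: field_simps)
  have head: "\<bar>\<Sum>j=1..min p m. sin (real j * y) / real j\<bar> \<le> pi"
  proof -
    have "\<bar>sin (real j * y) / real j\<bar> \<le> \<bar>y\<bar>" if "1 \<le> j" for j
      using abs_sin_x_le_abs_x[of "real j * y"] that by (simp add: abs_mult field_simps)
    then have "\<bar>\<Sum>j=1..min p m. sin (real j * y) / real j\<bar> \<le> (\<Sum>j=1..min p m. \<bar>y\<bar>)"
      by (intro order_trans[OF sum_abs sum_mono]) auto
    also have "\<dots> \<le> real m * \<bar>y\<bar>"
      by (simp add: mult_right_mono)
    also have "\<dots> \<le> pi"
      by (rule m(1))
    finally show ?thesis .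
  qed
  have tail: "\<bar>\<Sum>j=Suc m..p. sin (real j * y) / real j\<bar> \<le> 4"
  proof -
    have "8 / (real (Suc m) * \<bar>y\<bar>) \<le> 8 / pi"
      using m(2) by (intro frac_le) auto
    also have "\<dots> \<le> 4" using pi_ge_two by (simp add: field_simps)
    finally show ?thesis
      using abs_sum_sin_div_tail_le[OF assms False, of "Suc m" p] by simp
  qed
  have "{1..p} = {1..min p m} \<union> {Suc m..p}" "{1..min p m} \<inter> {Suc m..p} = {}" by auto
  then have "(\<Sum>j=1..p. sin (real j * y) / real j) =
      (\<Sum>j=1..min p m. sin (real j * y) / real j) + (\<Sum>j=Suc m..p. sin (real j * y) / real j)"
    by (simp add: sum.union_disjoint[symmetric])
  then show ?thesis using head tail by linarith
qed simp

section \<open>Fejer and de la Vallee Poussin means\<close>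

lemma sum_symmetric_interval_split:
  fixes G :: "int \<Rightarrow> 'a::comm_monoid_add"
  assumes "n \<le> M"
  shows "(\<Sum>k\<in>{-int M..int M}. G k) =
    (\<Sum>k\<in>{-int n..int n}. G k) + (\<Sum>k\<in>{Suc n..M}. G (int k) + G (- int k))"
  using assms
proof (induction M rule: dec_induct)
  case (step M)
  have "{-int (Suc M)..int (Suc M)} = insert (int (Suc M)) (insert (- int (Suc M)) {-int M..int M})"
    by auto
  then show ?case using step by (simp add: algebra_simps)
qed simp

lemma double_sum_diff_eq:
  fixes F :: "int \<Rightarrow> 'a::comm_ring_1"
  shows "(\<Sum>j<Suc N. \<Sum>l<Suc N. F (int j - int l)) =
    (\<Sum>k\<in>{-int N..int N}. of_int (int N + 1 - \<bar>k\<bar>) * F k)"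
proof (induction N)
  case (Suc N)
  have new_row: "(\<Sum>j<Suc N. F (int j - int (Suc N))) = (\<Sum>k\<in>{-int (Suc N)..-1}. F k)"
    by (rule sum.reindex_bij_witness[where i="\<lambda>k. nat (k + int (Suc N))" and j="\<lambda>j. int j - int (Suc N)"]) auto
  have new_column: "(\<Sum>l<Suc (Suc N). F (int (Suc N) - int l)) = (\<Sum>k\<in>{0..int (Suc N)}. F k)"
    by (rule sum.reindex_bij_witness[where i="\<lambda>k. nat (int (Suc N) - k)" and j="\<lambda>l. int (Suc N) - int l"]) auto
  have "{-int (Suc N)..int (Suc N)} = {-int (Suc N)..-1} \<union> {0..int (Suc N)}" by auto
  then have split: "(\<Sum>k\<in>{-int (Suc N)..int (Suc N)}. F k) =
      (\<Sum>k\<in>{-int (Suc N)..-1}. F k) + (\<Sum>k\<in>{0..int (Suc N)}. F k)"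
    by (simp add: sum.union_disjoint)
  have extend: "(\<Sum>k\<in>{-int (Suc N)..int (Suc N)}. of_int (int N + 1 - \<bar>k\<bar>) * F k) =
      (\<Sum>k\<in>{-int N..int N}. of_int (int N + 1 - \<bar>k\<bar>) * F k)"
    using sum_symmetric_interval_split[of N "Suc N" "\<lambda>k. of_int (int N + 1 - \<bar>k\<bar>) * F k"] by simp
  have "(\<Sum>j<Suc (Suc N). \<Sum>l<Suc (Suc N). F (int j - int l)) =
      (\<Sum>j<Suc N. \<Sum>l<Suc N. F (int j - int l)) + (\<Sum>j<Suc N. F (int j - int (Suc N))) +
      (\<Sum>l<Suc (Suc N). F (int (Suc N) - int l))"
    by (simp add: sum.distrib algebra_simps)
  also have "\<dots> = (\<Sum>k\<in>{-int (Suc N)..int (Suc N)}. of_int (int N + 1 - \<bar>k\<bar>) * F k) +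
      (\<Sum>k\<in>{-int (Suc N)..int (Suc N)}. F k)"
    unfolding Suc.IH new_row new_column split extend by (simp add: algebra_simps)
  finally show ?case by (simp add: sum.distrib[symmetric] algebra_simps)
qed simp

definition fejer_weight :: "nat \<Rightarrow> int \<Rightarrow> real" where
  "fejer_weight N k = 1 - \<bar>real_of_int k\<bar> / (real N + 1)"

definition fejer_kernel :: "nat \<Rightarrow> real \<Rightarrow> complex" where
  "fejer_kernel N y = (\<Sum>k\<in>{-int N..int N}. of_real (fejer_weight N k) * expi k y)"

definition fejer_mean :: "nat \<Rightarrow> (real \<Rightarrow> complex) \<Rightarrow> real \<Rightarrow> complex" where
  "fejer_mean N g = trig_poly (\<lambda>k. of_real (fejer_weight N k) * fourier_coeff g k) {-int N..int N}"

lemma fejer_kernel_eq_norm_square: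
  "fejer_kernel N y = of_real ((norm (\<Sum>j<Suc N. expi (int j) y))\<^sup>2 / (real N + 1))"
proof -
  define S where "S = (\<Sum>j<Suc N. expi (int j) y)"
  have "of_real ((norm S)\<^sup>2) = S * cnj S"
    by (rule complex_norm_square)
  also have "\<dots> = (\<Sum>j<Suc N. \<Sum>l<Suc N. expi (int j - int l) y)"
    unfolding S_def cnj_sum cnj_expi sum_product expi_mult by simp
  also have "\<dots> = (\<Sum>k\<in>{-int N..int N}. of_int (int N + 1 - \<bar>k\<bar>) * expi k y)"
    by (rule double_sum_diff_eq)
  finally have "of_real ((norm S)\<^sup>2 / (real N + 1)) =
      (\<Sum>k\<in>{-int N..int N}. of_int (int N + 1 - \<bar>k\<bar>) * expi k y) * of_real (1 / (real N + 1))"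
    by (simp add: divide_inverse of_real_mult)
  also have "\<dots> = fejer_kernel N y"
  proof -
    have "complex_of_real (fejer_weight N k) = of_int (int N + 1 - \<bar>k\<bar>) * of_real (1 / (real N + 1))" for k
    proof -
      have "fejer_weight N k = real_of_int (int N + 1 - \<bar>k\<bar>) * (1 / (real N + 1))"
        by (simp add: fejer_weight_def field_simps)
      then show ?thesis by (simp only: of_real_mult of_real_of_int_eq)
    qed
    then show ?thesis
      unfolding fejer_kernel_def sum_distrib_right by (intro sum.cong refl) simp
  qed
  finally show ?thesis unfolding S_def ..
qed

lemma fejer_kernel_eq_of_real_norm: "fejer_kernel N y = of_real (norm (fejer_kernel N y))"
proof -
  define r where "r = (norm (\<Sum>j<Suc N. expi (int j) y))\<^sup>2 / (real N + 1)"
  have "r \<ge> 0" by (simp add: r_def)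
  then show ?thesis unfolding fejer_kernel_eq_norm_square r_def[symmetric] by simp
qed

lemma fejer_mean_eq_convolution:
  assumes g: "g absolutely_integrable_on {-pi..pi}"
  shows "fejer_mean N g x = integral {-pi..pi} (\<lambda>t. g t * fejer_kernel N (x - t)) / (2 * pi)"
proof -
  have "fejer_kernel N (x - t) = (\<Sum>k\<in>{-int N..int N}. (of_real (fejer_weight N k) * expi k x) * expi (- k) t)" for t
    unfolding fejer_kernel_def expi_def by (intro sum.cong refl) (simp add: exp_add[symmetric] algebra_simps)
  then have "integral {-pi..pi} (\<lambda>t. g t * fejer_kernel N (x - t)) =
      integral {-pi..pi} (\<lambda>t. g t * (\<Sum>k\<in>{-int N..int N}. (of_real (fejer_weight N k) * expi k x) * expi (- k) t))"
    by (simp only:)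
  also have "\<dots> = 2 * pi * (\<Sum>k\<in>{-int N..int N}. (of_real (fejer_weight N k) * expi k x) * fourier_coeff g (- (- k)))"
    by (rule integral_mult_expi_sum[OF g]) simp
  also have "\<dots> = 2 * pi * fejer_mean N g x"
    by (simp add: fejer_mean_def trig_poly_def algebra_simps)
  finally show ?thesis by simp
qed

lemma absolutely_integrable_of_real_norm:
  fixes g :: "real \<Rightarrow> complex"
  assumes "g absolutely_integrable_on S"
  shows "(\<lambda>t. complex_of_real (norm (g t))) absolutely_integrable_on S"
proof -
  have r: "(\<lambda>t. norm (g t)) integrable_on S"
    using assms by (simp add: absolutely_integrable_on_def)
  then have "(\<lambda>t. complex_of_real (norm (g t))) integrable_on S"
    using has_integral_of_real[OF integrable_integral[OF r]] by blast
  then show ?thesis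
    using r by (intro absolutely_integrable_integrable_bound[where g="\<lambda>t. norm (g t)"]) auto
qed

lemma norm_fejer_mean_le:
  assumes g: "g absolutely_integrable_on {-pi..pi}"
  shows "norm (fejer_mean N g x) \<le> Re (fejer_mean N (\<lambda>t. complex_of_real (norm (g t))) x)"
proof -
  note G = absolutely_integrable_of_real_norm[OF g]
  have continuous: "continuous_on {-pi..pi} (\<lambda>t. fejer_kernel N (x - t))"
    unfolding fejer_kernel_def expi_def by (intro continuous_intros)
  have integrable: "(\<lambda>t. h t * fejer_kernel N (x - t)) integrable_on {-pi..pi}"
    if "h absolutely_integrable_on {-pi..pi}" for h
    by (intro set_lebesgue_integral_eq_integral(1) absolutely_integrable_mult_continuous that continuous)
  have "norm (integral {-pi..pi} (\<lambda>t. g t * fejer_kernel N (x - t))) \<le>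
      integral {-pi..pi} (\<lambda>t. Re (of_real (norm (g t)) * fejer_kernel N (x - t)))"
  proof (rule integral_norm_bound_integral[OF integrable[OF g]])
    show "(\<lambda>t. Re (of_real (norm (g t)) * fejer_kernel N (x - t))) integrable_on {-pi..pi}"
      using has_integral_Re_integral[OF integrable[OF G]] by blast
    show "norm (g t * fejer_kernel N (x - t)) \<le> Re (of_real (norm (g t)) * fejer_kernel N (x - t))" for t
      by (subst (2) fejer_kernel_eq_of_real_norm) (simp add: norm_mult)
  qed
  also have "\<dots> = Re (integral {-pi..pi} (\<lambda>t. of_real (norm (g t)) * fejer_kernel N (x - t)))"
    using has_integral_Re_integral[OF integrable[OF G]] by (rule integral_unique)
  finally show ?thesis
    unfolding fejer_mean_eq_convolution[OF g] fejer_mean_eq_convolution[OF G]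
    by (simp add: norm_divide divide_right_mono)
qed

lemma L_norm_fejer_mean_le:
  assumes g: "g absolutely_integrable_on {-pi..pi}"
  shows "L_norm (fejer_mean N g) \<le> L_norm g"
proof -
  define G where "G t = complex_of_real (norm (g t))" for t
  have "(\<lambda>t. norm (g t)) integrable_on {-pi..pi}"
    using g by (simp add: absolutely_integrable_on_def)
  then have G_integral: "(G has_integral of_real (L_norm g)) {-pi..pi}"
    unfolding G_def L_norm_def by (intro has_integral_of_real integrable_integral)
  have "L_norm (fejer_mean N g) \<le> integral {-pi..pi} (\<lambda>x. Re (fejer_mean N G x))"
    using norm_fejer_mean_le[OF g] unfolding G_def[symmetric] fejer_mean_def
    by (intro L_norm_le_integral absolutely_integrable_trig_poly integrable_continuous_interval continuous_intros)
  also have "\<dots> = Re (integral {-pi..pi} (fejer_mean N G))"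
    unfolding fejer_mean_def
    by (intro integral_unique has_integral_Re_integral integrable_continuous_interval continuous_on_trig_poly)
  also have "\<dots> = Re (2 * pi * fourier_coeff (fejer_mean N G) 0)"
    by (simp only: integral_eq_fourier_coeff_0)
  also have "\<dots> = Re (integral {-pi..pi} G)"
    by (simp add: fejer_mean_def fourier_coeff_trig_poly fejer_weight_def integral_eq_fourier_coeff_0)
  also have "\<dots> = L_norm g"
    using G_integral by (simp add: integral_unique)
  finally show ?thesis .
qed

definition vallee_poussin :: "nat \<Rightarrow> (real \<Rightarrow> complex) \<Rightarrow> real \<Rightarrow> complex" where
  "vallee_poussin n g x = 2 * fejer_mean (2 * n - 1) g x - fejer_mean (n - 1) g x"

definition vallee_poussin_weight :: "nat \<Rightarrow> int \<Rightarrow> real" where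
  "vallee_poussin_weight n k =
    2 * fejer_weight (2 * n - 1) k - (if \<bar>k\<bar> \<le> int n - 1 then fejer_weight (n - 1) k else 0)"

lemma continuous_on_vallee_poussin [continuous_intros]: "continuous_on A (vallee_poussin n g)"
  unfolding vallee_poussin_def fejer_mean_def by (intro continuous_intros)

lemma absolutely_integrable_vallee_poussin: "vallee_poussin n g absolutely_integrable_on {-pi..pi}"
  by (intro absolutely_integrable_continuous_real continuous_on_vallee_poussin)

lemma L_norm_vallee_poussin_le:
  assumes "g absolutely_integrable_on {-pi..pi}"
  shows "L_norm (vallee_poussin n g) \<le> 3 * L_norm g"
proof -
  have "L_norm (vallee_poussin n g) \<le> L_norm (\<lambda>x. 2 * fejer_mean (2 * n - 1) g x) + L_norm (fejer_mean (n - 1) g)"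
    unfolding vallee_poussin_def[abs_def] fejer_mean_def
    by (intro L_norm_diff_le absolutely_integrable_continuous_real continuous_intros)
  also have "\<dots> = 2 * L_norm (fejer_mean (2 * n - 1) g) + L_norm (fejer_mean (n - 1) g)"
    by (simp add: L_norm_cmult)
  also have "\<dots> \<le> 3 * L_norm g"
    using L_norm_fejer_mean_le[OF assms, of "2 * n - 1"] L_norm_fejer_mean_le[OF assms, of "n - 1"] by linarith
  finally show ?thesis .
qed

lemma vallee_poussin_eq:
  assumes "1 \<le> n"
  shows "vallee_poussin n g x = (\<Sum>k\<in>{-int (2*n-1)..int (2*n-1)}.
    of_real (vallee_poussin_weight n k) * fourier_coeff g k * expi k x)"
proof -
  have "fejer_mean (n - 1) g x = (\<Sum>k\<in>{-int (2*n-1)..int (2*n-1)}.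
      of_real (if \<bar>k\<bar> \<le> int n - 1 then fejer_weight (n - 1) k else 0) * fourier_coeff g k * expi k x)"
    unfolding fejer_mean_def trig_poly_def
    by (rule sum.mono_neutral_cong_left) (use assms in auto)
  then show ?thesis
    unfolding vallee_poussin_def vallee_poussin_weight_def fejer_mean_def trig_poly_def
    by (simp add: sum_distrib_left sum_subtractf[symmetric] algebra_simps)
qed

lemma vallee_poussin_weight_eq_1:
  assumes "1 \<le> n" "\<bar>k\<bar> \<le> int n"
  shows "vallee_poussin_weight n k = 1"
proof (cases "\<bar>k\<bar> \<le> int n - 1")
  case False
  then have "\<bar>k\<bar> = int n" using assms by linarith
  then have "\<bar>real_of_int k\<bar> = real n" by (metis of_int_abs of_int_of_nat_eq)
  then show ?thesis using assms False unfolding vallee_poussin_weight_def fejer_weight_def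
    by (simp add: of_nat_diff field_simps)
qed (use assms in \<open>simp add: vallee_poussin_weight_def fejer_weight_def of_nat_diff field_simps\<close>)

lemma vallee_poussin_weight_eq:
  assumes "1 \<le> n" "int n < \<bar>k\<bar>"
  shows "vallee_poussin_weight n k = 2 - \<bar>real_of_int k\<bar> / real n"
  using assms by (simp add: vallee_poussin_weight_def fejer_weight_def of_nat_diff field_simps)

lemma vallee_poussin_diff:
  assumes "f absolutely_integrable_on {-pi..pi}" "g absolutely_integrable_on {-pi..pi}"
  shows "vallee_poussin n (\<lambda>x. f x - g x) x = vallee_poussin n f x - vallee_poussin n g x"
proof -
  have "fejer_mean N (\<lambda>x. f x - g x) x = fejer_mean N f x - fejer_mean N g x" for N
    unfolding fejer_mean_def trig_poly_def fourier_coeff_diff[OF assms] sum_subtractf[symmetric]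
    by (intro sum.cong refl) (simp add: algebra_simps)
  then show ?thesis unfolding vallee_poussin_def by (simp only:) (simp add: algebra_simps)
qed

lemma vallee_poussin_trig_poly:
  assumes "1 \<le> n"
  shows "vallee_poussin n (trig_poly a {-int n..int n}) x = trig_poly a {-int n..int n} x"
proof -
  have "vallee_poussin n (trig_poly a {-int n..int n}) x =
      (\<Sum>k\<in>{-int (2*n-1)..int (2*n-1)}. of_real (vallee_poussin_weight n k) * (if k \<in> {-int n..int n} then a k else 0) * expi k x)"
    by (simp add: vallee_poussin_eq[OF assms] fourier_coeff_trig_poly)
  also have "\<dots> = (\<Sum>k\<in>{-int n..int n}. of_real (vallee_poussin_weight n k) * a k * expi k x)"
    by (rule sum.mono_neutral_cong_right) (use assms in auto)
  also have "\<dots> = trig_poly a {-int n..int n} x"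
    unfolding trig_poly_def using vallee_poussin_weight_eq_1[OF assms] by (intro sum.cong) auto
  finally show ?thesis .
qed

lemma L_norm_sub_vallee_poussin_le:
  assumes f: "f absolutely_integrable_on {-pi..pi}" and n: "1 \<le> n"
  shows "L_norm (\<lambda>x. f x - vallee_poussin n f x) \<le> 4 * best_approx f n"
proof -
  have "L_norm (\<lambda>x. f x - vallee_poussin n f x) / 4 \<le> best_approx f n"
    unfolding best_approx_def
  proof (rule cINF_greatest)
    fix a :: "int \<Rightarrow> complex"
    define T where "T = trig_poly a {-int n..int n}"
    have fT: "(\<lambda>x. f x - T x) absolutely_integrable_on {-pi..pi}"
      unfolding T_def by (rule set_integral_diff(1)[OF f absolutely_integrable_trig_poly])
    have decompose: "f x - vallee_poussin n f x = (f x - T x) - vallee_poussin n (\<lambda>x. f x - T x) x" for x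
      unfolding T_def vallee_poussin_diff[OF f absolutely_integrable_trig_poly]
        vallee_poussin_trig_poly[OF n] by simp
    then have "L_norm (\<lambda>x. f x - vallee_poussin n f x) =
        L_norm (\<lambda>x. (f x - T x) - vallee_poussin n (\<lambda>x. f x - T x) x)"
      by (simp only: decompose)
    also have "\<dots> \<le> L_norm (\<lambda>x. f x - T x) + L_norm (vallee_poussin n (\<lambda>x. f x - T x))"
      by (rule L_norm_diff_le[OF fT absolutely_integrable_vallee_poussin])
    also have "\<dots> \<le> 4 * L_norm (\<lambda>x. f x - T x)"
      using L_norm_vallee_poussin_le[OF fT] by simp
    finally show "L_norm (\<lambda>x. f x - vallee_poussin n f x) / 4 \<le>
        L_norm (\<lambda>x. f x - (\<Sum>k = - int n..int n. a k * exp (\<i> * of_int k * of_real x)))"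
      by (simp add: T_def trig_poly_def expi_def)
  qed simp
  then show ?thesis by simp
qed

section \<open>Sequences of class NBVS\<close>

definition dyadic_variation_le :: "real \<Rightarrow> (nat \<Rightarrow> 'a::real_normed_vector) \<Rightarrow> bool" where
  "dyadic_variation_le K d \<longleftrightarrow>
    (\<forall>m\<ge>1. (\<Sum>n=m..2*m. norm (d n - d (Suc n))) \<le> K * (norm (d m) + norm (d (2*m))))"

lemma NBVS_E:
  assumes "NBVS c"
  obtains \<theta> K where "0 \<le> \<theta>" "\<theta> < pi / 2" "\<forall>n\<ge>1. c n \<in> sector \<theta>" "0 < K" "dyadic_variation_le K c"
  using assms unfolding NBVS_def dyadic_variation_le_def by blast

lemma norm_le_norm_add_variation:
  fixes d :: "nat \<Rightarrow> 'a::real_normed_vector"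
  assumes "m \<le> n"
  shows "norm (d n) \<le> norm (d m) + (\<Sum>i=m..<n. norm (d i - d (Suc i)))"
  using assms
proof (induction n rule: dec_induct)
  case (step n)
  then show ?case using norm_triangle_sub[of "d (Suc n)" "d n"] by (simp add: norm_minus_commute)
qed simp

lemma dyadic_variation_norm_le:
  assumes "dyadic_variation_le K d" "1 \<le> m" "m \<le> k" "k \<le> 2 * m"
  shows "norm (d k) \<le> norm (d m) + K * (norm (d m) + norm (d (2 * m)))"
proof -
  have "(\<Sum>i=m..<k. norm (d i - d (Suc i))) \<le> (\<Sum>i=m..2*m. norm (d i - d (Suc i)))"
    using assms by (intro sum_mono2) auto
  also have "\<dots> \<le> K * (norm (d m) + norm (d (2 * m)))"
    using assms unfolding dyadic_variation_le_def by auto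
  finally show ?thesis using norm_le_norm_add_variation[OF assms(3), of d] by linarith
qed

lemma sector_cos_mult_norm_le_Re:
  assumes "z \<in> sector \<theta>" "0 \<le> \<theta>" "\<theta> < pi / 2"
  shows "cos \<theta> * norm z \<le> Re z"
proof (cases "z = 0")
  case False
  then have "\<bar>Arg z\<bar> \<le> \<theta>" using assms(1) by (auto simp: sector_def)
  then have "cos \<theta> \<le> cos \<bar>Arg z\<bar>" using assms by (intro cos_monotone_0_pi_le) auto
  also have "cos \<bar>Arg z\<bar> = Re z / norm z"
    using cos_Arg[OF False] by (simp add: abs_if)
  finally show ?thesis using False by (simp add: field_simps)
qed simp

definition harmonic_tail :: "(nat \<Rightarrow> 'a::real_normed_vector) \<Rightarrow> nat \<Rightarrow> real" where
  "harmonic_tail d q = (\<Sum>j=1..q. norm (d (q + j)) / real j)"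

lemma harmonic_tail_nonneg: "0 \<le> harmonic_tail d q"
  unfolding harmonic_tail_def by (intro sum_nonneg) auto

lemma norm_mult_harm_le_harmonic_tail:
  assumes K: "dyadic_variation_le K d" "0 \<le> K" and p: "1 \<le> p" "2 * p \<le> n" "n \<le> 2 * p + 1"
  shows "norm (d n) * harm p \<le> (1 + K) * (harmonic_tail d p + 2 * harmonic_tail d (2 * p))"
proof -
  have per_term: "norm (d n) \<le> (1 + K) * (norm (d (p + j)) + norm (d (2 * (p + j))))" if "j \<in> {1..p}" for j
  proof -
    have "norm (d n) \<le> norm (d (p + j)) + K * (norm (d (p + j)) + norm (d (2 * (p + j))))"
      using dyadic_variation_norm_le[OF K(1), of "p + j" n] that p by auto
    then show ?thesis
      using norm_ge_zero[of "d (2 * (p + j))"] by (simp only: distrib_left distrib_right mult_1)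
  qed
  have "norm (d n) * harm p = (\<Sum>j=1..p. norm (d n) / real j)"
    by (simp add: harm_def sum_distrib_left divide_inverse)
  also have "\<dots> \<le> (\<Sum>j=1..p. (1 + K) * (norm (d (p + j)) + norm (d (2 * (p + j)))) / real j)"
    using per_term by (intro sum_mono divide_right_mono) auto
  also have "\<dots> = (1 + K) * (harmonic_tail d p + 2 * (\<Sum>j=1..p. norm (d (2 * p + 2 * j)) / real (2 * j)))"
    by (simp add: harmonic_tail_def sum_distrib_left sum.distrib add_divide_distrib algebra_simps)
  also have "(\<Sum>j=1..p. norm (d (2 * p + 2 * j)) / real (2 * j)) \<le> harmonic_tail d (2 * p)"
  proof -
    have "(\<Sum>j=1..p. norm (d (2 * p + 2 * j)) / real (2 * j)) = (\<Sum>i\<in>(\<lambda>j. 2 * j) ` {1..p}. norm (d (2 * p + i)) / real i)"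
      by (subst sum.reindex) (auto simp: inj_on_def)
    also have "\<dots> \<le> harmonic_tail d (2 * p)"
      unfolding harmonic_tail_def by (intro sum_mono2) auto
    finally show ?thesis .
  qed
  finally show ?thesis using K(2) by (simp add: mult_left_mono)
qed

lemma ln_le_two_harm_half:
  assumes "1 \<le> n"
  shows "ln (real n) \<le> 2 * harm (n div 2)"
proof -
  have "n \<le> 2 * (n div 2) + 1" by presburger
  then have "real n \<le> 2 * real (n div 2) + 1" by linarith
  also have "\<dots> \<le> (real (n div 2) + 1)\<^sup>2"
    by (simp add: power2_eq_square algebra_simps)
  finally have "real n \<le> (real (n div 2) + 1)\<^sup>2" .
  then have "ln (real n) \<le> ln ((real (n div 2) + 1)\<^sup>2)"
    using assms by (subst ln_le_cancel_iff) auto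
  also have "\<dots> \<le> 2 * harm (n div 2)"
    using ln_le_harm[of "n div 2"] by (simp add: ln_realpow)
  finally show ?thesis .
qed

lemma norm_mult_ln_bigo_harmonic_tail:
  assumes K: "dyadic_variation_le K d" "0 \<le> K"
  shows "(\<lambda>n. norm (d n) * ln (real n)) \<in>
    O(\<lambda>n. harmonic_tail d (n div 2) + 2 * harmonic_tail d (2 * (n div 2)))"
proof (rule landau_o.bigI)
  show "0 < 2 * (1 + K)"
    using K by simp
  show "eventually (\<lambda>n. norm (norm (d n) * ln (real n)) \<le>
      2 * (1 + K) * norm (harmonic_tail d (n div 2) + 2 * harmonic_tail d (2 * (n div 2)))) at_top"
    using eventually_ge_at_top[of 2]
  proof eventually_elim
    case (elim n)
    have "norm (d n) * ln (real n) \<le> norm (d n) * (2 * harm (n div 2))"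
      using elim by (intro mult_left_mono ln_le_two_harm_half) auto
    also have "\<dots> = 2 * (norm (d n) * harm (n div 2))"
      by simp
    also have "\<dots> \<le> 2 * ((1 + K) * (harmonic_tail d (n div 2) + 2 * harmonic_tail d (2 * (n div 2))))"
      using norm_mult_harm_le_harmonic_tail[OF K, of "n div 2" n] elim by simp
    finally show ?case
      using elim by (simp add: harmonic_tail_nonneg algebra_simps)
  qed
qed

section \<open>Coefficients of the remainder \<open>f - S\<^sub>p f\<close>\<close>

definition sine_kernel :: "nat \<Rightarrow> real \<Rightarrow> complex" where
  "sine_kernel p y = (\<Sum>j=1..p. (expi (int p + int j) y - expi (int p - int j) y) / of_nat j)"

lemma sine_kernel_eq:
  "sine_kernel p y = 2 * \<i> * expi (int p) y * of_real (\<Sum>j=1..p. sin (real j * y) / real j)"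
proof -
  have "expi (int p + int j) y - expi (int p - int j) y = expi (int p) y * (2 * \<i> * of_real (sin (real j * y)))" for j
  proof -
    have "expi (int j) y - expi (- int j) y = 2 * \<i> * of_real (sin (real j * y))"
      by (simp add: expi_eq_cis complex_eq_iff)
    then show ?thesis
      by (metis expi_mult right_diff_distrib diff_conv_add_uminus)
  qed
  then show ?thesis
    by (simp add: sine_kernel_def sum_distrib_left sum_divide_distrib mult_ac)
qed

lemma norm_sine_kernel_le:
  assumes "\<bar>y\<bar> \<le> pi"
  shows "norm (sine_kernel p y) \<le> 2 * pi + 8"
  using abs_sum_sin_div_le[OF assms, of p] unfolding sine_kernel_eq norm_mult norm_of_real by simp

lemma absolutely_integrable_partial_sum_error:
  "f absolutely_integrable_on {-pi..pi} \<Longrightarrow>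
    (\<lambda>x. f x - partial_sum f p x) absolutely_integrable_on {-pi..pi}"
  unfolding partial_sum_eq_trig_poly by (rule set_integral_diff(1)[OF _ absolutely_integrable_trig_poly])

lemma fourier_coeff_partial_sum_error:
  assumes "f absolutely_integrable_on {-pi..pi}"
  shows "fourier_coeff (\<lambda>x. f x - partial_sum f p x) k = (if \<bar>k\<bar> \<le> int p then 0 else fourier_coeff f k)"
  unfolding partial_sum_eq_trig_poly fourier_coeff_diff[OF assms absolutely_integrable_trig_poly]
  by (auto simp: fourier_coeff_trig_poly)

lemma norm_sum_shifted_coeff_le_L_norm:
  assumes g: "g absolutely_integrable_on {-pi..pi}" and s: "\<bar>s\<bar> = 1"
    and vanish: "\<And>k. \<bar>k\<bar> \<le> int p \<Longrightarrow> fourier_coeff g k = 0"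
  shows "2 * pi * norm (\<Sum>j=1..p. fourier_coeff g (s * (int p + int j)) / of_nat j) \<le> (2 * pi + 8) * L_norm g"
proof -
  \<comment> \<open>Pairing g with h picks out the sum on the left, as the coefficients of g at s(p - j) vanish.\<close>
  define h where "h x = sine_kernel p (- (of_int s * x))" for x
  have expi_scale: "expi k (- (of_int s * x)) = expi (- (s * k)) x" for k x
    by (simp add: expi_def algebra_simps)
  have "\<bar>real_of_int s\<bar> = 1"
    using s by (metis of_int_abs of_int_1)
  have h: "h x = (\<Sum>j\<in>{1..p}. (1 / of_nat j) * expi (- s * (int p + int j)) x) -
      (\<Sum>j\<in>{1..p}. (1 / of_nat j) * expi (- s * (int p - int j)) x)" for x
    by (simp add: h_def sine_kernel_def expi_scale diff_divide_distrib sum_subtractf)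
  have "integral {-pi..pi} (\<lambda>x. g x * h x) =
      integral {-pi..pi} (\<lambda>x. g x * (\<Sum>j\<in>{1..p}. (1 / of_nat j) * expi (- s * (int p + int j)) x)) -
      integral {-pi..pi} (\<lambda>x. g x * (\<Sum>j\<in>{1..p}. (1 / of_nat j) * expi (- s * (int p - int j)) x))"
    unfolding h right_diff_distrib
    by (intro integral_diff set_lebesgue_integral_eq_integral(1) absolutely_integrable_mult_continuous g
        continuous_intros)
  also have "\<dots> = 2 * pi * (\<Sum>j\<in>{1..p}. (1 / of_nat j) * fourier_coeff g (- (- s * (int p + int j)))) -
      2 * pi * (\<Sum>j\<in>{1..p}. (1 / of_nat j) * fourier_coeff g (- (- s * (int p - int j))))"
    by (simp only: integral_mult_expi_sum[OF g finite_atLeastAtMost])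
  also have "\<dots> = 2 * pi * (\<Sum>j=1..p. fourier_coeff g (s * (int p + int j)) / of_nat j)"
  proof -
    have "fourier_coeff g (s * (int p - int j)) = 0" if "j \<in> {1..p}" for j
      using that s by (intro vanish) (auto simp: abs_mult)
    then show ?thesis by simp
  qed
  finally have "2 * pi * norm (\<Sum>j=1..p. fourier_coeff g (s * (int p + int j)) / of_nat j) =
      norm (integral {-pi..pi} (\<lambda>x. g x * h x))"
    by (simp add: norm_mult)
  also have "\<dots> \<le> (2 * pi + 8) * L_norm g"
  proof (rule norm_integral_mult_le_L_norm[OF g])
    show "continuous_on {-pi..pi} h"
      unfolding h by (intro continuous_intros)
    show "norm (h x) \<le> 2 * pi + 8" if "x \<in> {-pi..pi}" for x
      unfolding h_def using that \<open>\<bar>real_of_int s\<bar> = 1\<close> by (intro norm_sine_kernel_le) (auto simp: abs_mult)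
  qed
  finally show ?thesis .
qed

lemma harmonic_tail_le_partial_sum_error:
  assumes f: "f absolutely_integrable_on {-pi..pi}" and s: "\<bar>s\<bar> = 1"
    and sector: "\<forall>n\<ge>1. fourier_coeff f (s * int n) \<in> sector \<theta>" and \<theta>: "0 \<le> \<theta>" "\<theta> < pi / 2"
  shows "cos \<theta> * (2 * pi) * harmonic_tail (\<lambda>n. fourier_coeff f (s * int n)) p \<le>
    (2 * pi + 8) * L_norm (\<lambda>x. f x - partial_sum f p x)"
proof -
  define d where "d n = fourier_coeff f (s * int n)" for n
  define g where "g x = f x - partial_sum f p x" for x
  have g_coeff: "fourier_coeff g (s * (int p + int j)) = d (p + j)" if "1 \<le> j" for j
    unfolding g_def fourier_coeff_partial_sum_error[OF f] d_def using that s by (auto simp: abs_mult)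
  have "cos \<theta> * harmonic_tail d p = (\<Sum>j=1..p. cos \<theta> * norm (d (p + j)) / real j)"
    by (simp add: harmonic_tail_def sum_distrib_left)
  also have "\<dots> \<le> (\<Sum>j=1..p. Re (d (p + j)) / real j)"
    using sector \<theta>
    by (intro sum_mono divide_right_mono sector_cos_mult_norm_le_Re) (auto simp: d_def simp del: of_nat_add)
  also have "\<dots> = Re (\<Sum>j=1..p. fourier_coeff g (s * (int p + int j)) / of_nat j)"
    by (simp add: g_coeff Re_divide_of_nat)
  also have "\<dots> \<le> norm (\<Sum>j=1..p. fourier_coeff g (s * (int p + int j)) / of_nat j)"
    by (rule complex_Re_le_cmod)
  finally have "2 * pi * (cos \<theta> * harmonic_tail d p) \<le>
      2 * pi * norm (\<Sum>j=1..p. fourier_coeff g (s * (int p + int j)) / of_nat j)"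
    by (intro mult_left_mono) auto
  also have "\<dots> \<le> (2 * pi + 8) * L_norm g"
    unfolding g_def
    by (intro norm_sum_shifted_coeff_le_L_norm absolutely_integrable_partial_sum_error f s)
      (simp add: fourier_coeff_partial_sum_error[OF f])
  finally show ?thesis by (simp add: g_def[abs_def] d_def[abs_def] algebra_simps)
qed

lemma harmonic_tail_bigo_partial_sum_error:
  assumes f: "f absolutely_integrable_on {-pi..pi}" and s: "\<bar>s\<bar> = 1"
    and sector: "\<forall>n\<ge>1. fourier_coeff f (s * int n) \<in> sector \<theta>" and \<theta>: "0 \<le> \<theta>" "\<theta> < pi / 2"
  shows "harmonic_tail (\<lambda>n. fourier_coeff f (s * int n)) \<in> O(\<lambda>q. L_norm (\<lambda>x. f x - partial_sum f q x))"
proof (rule landau_o.bigI)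
  have "0 < cos \<theta>"
    using \<theta> by (intro cos_gt_zero_pi) auto
  then show "0 < (2 * pi + 8) / (cos \<theta> * (2 * pi))"
    by (simp add: add_pos_pos)
  have "harmonic_tail (\<lambda>n. fourier_coeff f (s * int n)) q \<le>
      (2 * pi + 8) / (cos \<theta> * (2 * pi)) * L_norm (\<lambda>x. f x - partial_sum f q x)" for q
    using harmonic_tail_le_partial_sum_error[OF f s sector \<theta>, of q] \<open>0 < cos \<theta>\<close>
    by (simp add: field_simps)
  then show "eventually (\<lambda>q. norm (harmonic_tail (\<lambda>n. fourier_coeff f (s * int n)) q) \<le>
      (2 * pi + 8) / (cos \<theta> * (2 * pi)) * norm (L_norm (\<lambda>x. f x - partial_sum f q x))) at_top"
    by (simp add: harmonic_tail_nonneg L_norm_nonneg)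
qed

section \<open>The difference \<open>V\<^sub>n f - S\<^sub>n f\<close>\<close>

lemma norm_diff_vallee_poussin_weighted_le:
  fixes d :: "nat \<Rightarrow> complex"
  assumes n: "1 \<le> n" and k: "n \<le> k" "k < 2 * n"
  defines "u \<equiv> \<lambda>k. of_real (2 - real k / real n) * d k"
  shows "norm (u k - u (Suc k)) \<le> norm (d k - d (Suc k)) + norm (d (Suc k)) / real n"
proof -
  define w where "w = 2 - real k / real n"
  have eq: "u k - u (Suc k) = of_real w * (d k - d (Suc k)) + of_real (1 / real n) * d (Suc k)"
    using n by (simp add: u_def w_def algebra_simps diff_divide_distrib add_divide_distrib)
  have w: "0 \<le> w" "w \<le> 1"
    using k n by (auto simp: w_def field_simps)
  have "norm (u k - u (Suc k)) \<le> w * norm (d k - d (Suc k)) + 1 / real n * norm (d (Suc k))"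
    unfolding eq using w
    by (intro order_trans[OF norm_triangle_ineq] add_mono) (simp_all add: norm_mult norm_divide)
  also have "\<dots> \<le> 1 * norm (d k - d (Suc k)) + 1 / real n * norm (d (Suc k))"
    using w by (intro add_mono mult_right_mono) auto
  finally show ?thesis by simp
qed

lemma vallee_poussin_tail_variation_le:
  fixes d :: "nat \<Rightarrow> complex"
  assumes K: "dyadic_variation_le K d" "0 \<le> K" and n: "1 \<le> n"
  defines "u \<equiv> \<lambda>k. of_real (2 - real k / real n) * d k"
  shows "norm (u (2 * n)) + (\<Sum>k=Suc n..<2*n. norm (u k - u (Suc k))) \<le>
    (1 + 2 * K) * (norm (d n) + norm (d (2 * n)))"
proof -
  define B where "B = norm (d n) + norm (d (2 * n))"
  have step: "norm (u k - u (Suc k)) \<le> norm (d k - d (Suc k)) + (1 + K) * B / real n"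
    if k: "Suc n \<le> k" "k < 2 * n" for k
  proof -
    have "norm (d (Suc k)) \<le> norm (d n) + K * B"
      using dyadic_variation_norm_le[OF K(1) n, of "Suc k"] k by (simp add: B_def)
    moreover have "norm (d n) \<le> B" "(1 + K) * B = B + K * B"
      by (simp_all add: B_def algebra_simps)
    ultimately have "norm (d (Suc k)) / real n \<le> (1 + K) * B / real n"
      by (intro divide_right_mono) auto
    then show ?thesis
      using norm_diff_vallee_poussin_weighted_le[OF n, of k d] k unfolding u_def by linarith
  qed
  have "(\<Sum>k=Suc n..<2*n. norm (u k - u (Suc k))) \<le>
      (\<Sum>k=Suc n..<2*n. norm (d k - d (Suc k)) + (1 + K) * B / real n)"
    by (intro sum_mono step) auto
  also have "\<dots> = (\<Sum>k=Suc n..<2*n. norm (d k - d (Suc k))) + real (2 * n - Suc n) / real n * ((1 + K) * B)"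
    by (simp add: sum.distrib)
  also have "(\<Sum>k=Suc n..<2*n. norm (d k - d (Suc k))) \<le> (\<Sum>k=n..2*n. norm (d k - d (Suc k)))"
    by (intro sum_mono2) auto
  also have "\<dots> \<le> K * B"
    using K(1) n by (auto simp: dyadic_variation_le_def B_def)
  also have "real (2 * n - Suc n) / real n * ((1 + K) * B) \<le> 1 * ((1 + K) * B)"
    using n K(2) by (intro mult_right_mono) (auto simp: B_def)
  finally have "(\<Sum>k=Suc n..<2*n. norm (u k - u (Suc k))) \<le> K * B + (1 + K) * B"
    by simp
  moreover have "u (2 * n) = 0"
    using n by (simp add: u_def)
  ultimately show ?thesis
    by (simp add: B_def algebra_simps)
qed

lemma norm_vallee_poussin_tail_le:
  fixes d :: "nat \<Rightarrow> complex"
  assumes K: "dyadic_variation_le K d" "0 \<le> K" and n: "1 \<le> n" and y: "\<bar>y\<bar> \<le> pi"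
  shows "norm (\<Sum>k=Suc n..2*n-1. of_real (2 - real k / real n) * d k * expi (int k) y) \<le>
    (1 + 2 * K) * (norm (d n) + norm (d (2 * n))) * (8 / max \<bar>y\<bar> (1 / real n))"
proof -
  define u where "u k = complex_of_real (2 - real k / real n) * d k" for k
  have split: "{Suc n..2*n} = insert (2*n) {Suc n..2*n-1}" and u0: "u (2 * n) = 0"
    using n by (auto simp: u_def)
  have "(\<Sum>k=Suc n..2*n-1. of_real (2 - real k / real n) * d k * expi (int k) y) =
      (\<Sum>k=Suc n..2*n. u k * expi (int k) y)"
    using n by (simp add: split u0) (simp add: u_def)
  also have "norm \<dots> \<le> (norm (u (2 * n)) + (\<Sum>k=Suc n..<2*n. norm (u k - u (Suc k)))) *
      (8 / max \<bar>y\<bar> (1 / real n))"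
    using n y by (intro norm_sum_by_parts_le norm_sum_expi_le_max) auto
  also have "\<dots> \<le> (1 + 2 * K) * (norm (d n) + norm (d (2 * n))) * (8 / max \<bar>y\<bar> (1 / real n))"
    unfolding u_def by (intro mult_right_mono vallee_poussin_tail_variation_le K n) simp
  finally show ?thesis .
qed

lemma vallee_poussin_sub_partial_sum_eq:
  assumes n: "1 \<le> n"
  shows "vallee_poussin n f x - partial_sum f n x =
    (\<Sum>k=Suc n..2*n-1. of_real (2 - real k / real n) * fourier_coeff f (int k) * expi (int k) x) +
    (\<Sum>k=Suc n..2*n-1. of_real (2 - real k / real n) * fourier_coeff f (- int k) * expi (int k) (- x))"
proof -
  have "vallee_poussin n f x =
      (\<Sum>k\<in>{-int n..int n}. of_real (vallee_poussin_weight n k) * fourier_coeff f k * expi k x) +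
      (\<Sum>k\<in>{Suc n..2*n-1}. of_real (vallee_poussin_weight n (int k)) * fourier_coeff f (int k) * expi (int k) x +
        of_real (vallee_poussin_weight n (- int k)) * fourier_coeff f (- int k) * expi (- int k) x)"
    unfolding vallee_poussin_eq[OF n] using n by (subst sum_symmetric_interval_split[of n]) auto
  moreover have "(\<Sum>k\<in>{-int n..int n}. of_real (vallee_poussin_weight n k) * fourier_coeff f k * expi k x) =
      partial_sum f n x"
    unfolding partial_sum_def expi_def using vallee_poussin_weight_eq_1[OF n] by (intro sum.cong) auto
  moreover have "vallee_poussin_weight n (int k) = 2 - real k / real n"
    "vallee_poussin_weight n (- int k) = 2 - real k / real n" if "k \<in> {Suc n..2*n-1}" for k
    using vallee_poussin_weight_eq[OF n, of "int k"] vallee_poussin_weight_eq[OF n, of "- int k"] that by auto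
  ultimately show ?thesis
    by (simp add: sum.distrib expi_minus)
qed

lemma has_integral_inverse_max_abs:
  assumes a: "0 < a" "a \<le> pi"
  shows "((\<lambda>x. 1 / max \<bar>x\<bar> a) has_integral 2 * (1 + ln pi - ln a)) {-pi..pi}"
proof -
  have "((\<lambda>x. 1 / a) has_integral 1) {0..a}"
    using has_integral_const_real[of "1 / a" 0 a] a by simp
  then have "((\<lambda>x. 1 / max \<bar>x\<bar> a) has_integral 1) {0..a}"
    by (rule has_integral_eq[rotated]) (simp add: max_def)
  moreover have "((\<lambda>x. 1 / x) has_integral (ln pi - ln a)) {a..pi}"
  proof (rule fundamental_theorem_of_calculus[OF a(2)])
    fix x assume "x \<in> {a..pi}"
    then have "0 < x" using a by auto
    then show "(ln has_vector_derivative 1 / x) (at x within {a..pi})"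
      by (auto intro!: derivative_eq_intros simp: has_real_derivative_iff_has_vector_derivative[symmetric])
  qed
  then have "((\<lambda>x. 1 / max \<bar>x\<bar> a) has_integral (ln pi - ln a)) {a..pi}"
    by (rule has_integral_eq[rotated]) (use a in \<open>simp add: max_def\<close>)
  ultimately have half: "((\<lambda>x. 1 / max \<bar>x\<bar> a) has_integral (1 + (ln pi - ln a))) {0..pi}"
    using a by (intro has_integral_combine) auto
  then have "((\<lambda>x. 1 / max \<bar>- x\<bar> a) has_integral (1 + (ln pi - ln a))) {-pi..-0}"
    by (subst has_integral_reflect_real)
  then have "((\<lambda>x. 1 / max \<bar>x\<bar> a) has_integral (1 + (ln pi - ln a))) {-pi..0}"
    by simp
  from has_integral_combine[OF _ _ this half] show ?thesis
    by (simp add: algebra_simps)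
qed

lemma L_norm_vallee_poussin_sub_partial_sum_le:
  assumes Kp: "dyadic_variation_le Kp (\<lambda>k. fourier_coeff f (int k))" "0 \<le> Kp"
    and Km: "dyadic_variation_le Km (\<lambda>k. fourier_coeff f (- int k))" "0 \<le> Km" and n: "1 \<le> n"
  shows "L_norm (\<lambda>x. vallee_poussin n f x - partial_sum f n x) \<le> 16 * (1 + ln pi + ln (real n)) *
    ((1 + 2 * Kp) * (norm (fourier_coeff f (int n)) + norm (fourier_coeff f (int (2 * n)))) +
     (1 + 2 * Km) * (norm (fourier_coeff f (- int n)) + norm (fourier_coeff f (- int (2 * n)))))"
    (is "_ \<le> _ * ?B")
proof -
  have "1 / real n \<le> 1"
    using n by simp
  then have "1 / real n \<le> pi"
    using pi_ge_two by linarith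
  then have integral: "((\<lambda>x. 8 * ?B * (1 / max \<bar>x\<bar> (1 / real n))) has_integral
      8 * ?B * (2 * (1 + ln pi - ln (1 / real n)))) {-pi..pi}"
    using n by (intro has_integral_mult_right has_integral_inverse_max_abs) auto
  have "norm (vallee_poussin n f x - partial_sum f n x) \<le> 8 * ?B * (1 / max \<bar>x\<bar> (1 / real n))"
    if "x \<in> {-pi..pi}" for x
  proof -
    have x: "\<bar>x\<bar> \<le> pi" "\<bar>- x\<bar> \<le> pi"
      using that by auto
    have "norm (vallee_poussin n f x - partial_sum f n x) \<le>
        norm (\<Sum>k=Suc n..2*n-1. of_real (2 - real k / real n) * fourier_coeff f (int k) * expi (int k) x) +
        norm (\<Sum>k=Suc n..2*n-1. of_real (2 - real k / real n) * fourier_coeff f (- int k) * expi (int k) (- x))"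
      unfolding vallee_poussin_sub_partial_sum_eq[OF n] by (rule norm_triangle_ineq)
    also have "\<dots> \<le> (1 + 2 * Kp) * (norm (fourier_coeff f (int n)) + norm (fourier_coeff f (int (2 * n)))) *
          (8 / max \<bar>x\<bar> (1 / real n)) +
        (1 + 2 * Km) * (norm (fourier_coeff f (- int n)) + norm (fourier_coeff f (- int (2 * n)))) *
          (8 / max \<bar>- x\<bar> (1 / real n))"
      using norm_vallee_poussin_tail_le[OF Kp n x(1)] norm_vallee_poussin_tail_le[OF Km n x(2)]
      by (intro add_mono) simp_all
    also have "\<dots> = 8 * ?B * (1 / max \<bar>x\<bar> (1 / real n))"
      by (simp add: algebra_simps)
    finally show ?thesis .
  qed
  then have "L_norm (\<lambda>x. vallee_poussin n f x - partial_sum f n x) \<le>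
      8 * ?B * (2 * (1 + ln pi - ln (1 / real n)))"
    unfolding integral_unique[OF integral, symmetric] partial_sum_eq_trig_poly
    by (intro L_norm_le_integral has_integral_integrable[OF integral] absolutely_integrable_continuous_real
        continuous_intros)
  then show ?thesis
    using n by (simp add: ln_div algebra_simps)
qed

lemma partial_sum_error_le:
  assumes f: "f absolutely_integrable_on {-pi..pi}"
    and Kp: "dyadic_variation_le Kp (\<lambda>k. fourier_coeff f (int k))" "0 \<le> Kp"
    and Km: "dyadic_variation_le Km (\<lambda>k. fourier_coeff f (- int k))" "0 \<le> Km" and n: "1 \<le> n"
  shows "L_norm (\<lambda>x. f x - partial_sum f n x) \<le> 4 * best_approx f n + 16 * (1 + ln pi + ln (real n)) *
    ((1 + 2 * Kp) * (norm (fourier_coeff f (int n)) + norm (fourier_coeff f (int (2 * n)))) +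
     (1 + 2 * Km) * (norm (fourier_coeff f (- int n)) + norm (fourier_coeff f (- int (2 * n)))))"
proof -
  have "L_norm (\<lambda>x. f x - partial_sum f n x) =
      L_norm (\<lambda>x. (f x - vallee_poussin n f x) - (partial_sum f n x - vallee_poussin n f x))"
    by simp
  also have "\<dots> \<le> L_norm (\<lambda>x. f x - vallee_poussin n f x) + L_norm (\<lambda>x. partial_sum f n x - vallee_poussin n f x)"
    unfolding partial_sum_eq_trig_poly
    by (intro L_norm_diff_le set_integral_diff(1) f absolutely_integrable_trig_poly absolutely_integrable_vallee_poussin)
  also have "L_norm (\<lambda>x. partial_sum f n x - vallee_poussin n f x) = L_norm (\<lambda>x. vallee_poussin n f x - partial_sum f n x)"
    by (simp add: L_norm_def norm_minus_commute)
  finally show ?thesis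
    using L_norm_sub_vallee_poussin_le[OF f n] L_norm_vallee_poussin_sub_partial_sum_le[OF Kp Km n] by linarith
qed

section \<open>Asymptotics\<close>

lemma cofinite_int_eq_sup:
  "(cofinite :: int filter) = sup (filtermap int sequentially) (filtermap (\<lambda>n. - int n) sequentially)"
  unfolding filter_eq_iff eventually_sup eventually_filtermap eventually_cofinite eventually_sequentially
proof (intro allI iffI)
  fix P :: "int \<Rightarrow> bool"
  assume "finite {x. \<not> P x}"
  then obtain k where "abs ` {x. \<not> P x} \<subseteq> {..k}"
    by (auto simp: finite_int_iff_bounded_le)
  then have "\<forall>n\<ge>nat k + 1. P (int n) \<and> P (- int n)"
    by force
  then show "(\<exists>N. \<forall>n\<ge>N. P (int n)) \<and> (\<exists>N. \<forall>n\<ge>N. P (- int n))"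
    by blast
next
  fix P :: "int \<Rightarrow> bool"
  assume "(\<exists>N. \<forall>n\<ge>N. P (int n)) \<and> (\<exists>N. \<forall>n\<ge>N. P (- int n))"
  then obtain N M where N: "\<forall>n\<ge>N. P (int n)" and M: "\<forall>n\<ge>M. P (- int n)"
    by blast
  have "{x. \<not> P x} \<subseteq> {- int M..int N}"
  proof
    fix x assume "x \<in> {x. \<not> P x}"
    moreover have "P x" if "int N \<le> x"
      using N[rule_format, of "nat x"] that by simp
    moreover have "P x" if "x \<le> - int M"
      using M[rule_format, of "nat (- x)"] that by simp
    ultimately show "x \<in> {- int M..int N}" by force
  qed
  then show "finite {x. \<not> P x}"
    by (rule finite_subset) simp
qed

lemma bigo_cofinite_int_iff:
  fixes h :: "int \<Rightarrow> real" and g :: "nat \<Rightarrow> real"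
  shows "h \<in> O[cofinite](\<lambda>k. g (nat \<bar>k\<bar>)) \<longleftrightarrow> (\<lambda>n. h (int n)) \<in> O(g) \<and> (\<lambda>n. h (- int n)) \<in> O(g)"
proof -
  have "h \<in> O[sup F G](\<lambda>k. g (nat \<bar>k\<bar>)) \<longleftrightarrow> h \<in> O[F](\<lambda>k. g (nat \<bar>k\<bar>)) \<and> h \<in> O[G](\<lambda>k. g (nat \<bar>k\<bar>))" for F G
    by (meson landau_o.big.sup landau_o.big.filter_mono sup_ge1 sup_ge2)
  then show ?thesis
    unfolding cofinite_int_eq_sup by (simp add: landau_o.big.in_filtermap_iff)
qed

lemma decreasing_from_one_le:
  fixes \<psi> :: "nat \<Rightarrow> real"
  assumes "\<forall>n\<ge>1. \<psi> (Suc n) \<le> \<psi> n" "1 \<le> m" "m \<le> n"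
  shows "\<psi> n \<le> \<psi> m"
  by (rule lift_Suc_antimono_le_ivl[of "{1..}"]) (use assms in auto)

lemma bigo_comp_larger_of_decreasing:
  fixes \<psi> :: "nat \<Rightarrow> real"
  assumes pos: "\<forall>n\<ge>1. 0 < \<psi> n" and dec: "\<forall>n\<ge>1. \<psi> (Suc n) \<le> \<psi> n" and "filterlim r at_top at_top"
    and "eventually (\<lambda>n. r n \<le> r' n) at_top"
  shows "(\<lambda>n. \<psi> (r' n)) \<in> O(\<lambda>n. \<psi> (r n))"
proof (rule landau_o.big_mono)
  have "eventually (\<lambda>n. 1 \<le> r n) at_top"
    using assms(3) by (simp add: filterlim_at_top)
  with assms(4) show "eventually (\<lambda>n. norm (\<psi> (r' n)) \<le> norm (\<psi> (r n))) at_top"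
  proof eventually_elim
    case (elim n)
    then have "0 < \<psi> (r' n)"
      using pos by auto
    then show ?case
      using decreasing_from_one_le[OF dec elim(2,1)] by simp
  qed
qed

lemma bigo_div2_of_doubling:
  fixes \<psi> :: "nat \<Rightarrow> real"
  assumes pos: "\<forall>n\<ge>1. 0 < \<psi> n" and dec: "\<forall>n\<ge>1. \<psi> (Suc n) \<le> \<psi> n"
    and doubling: "\<psi> \<in> O(\<lambda>n. \<psi> (2 * n))"
  shows "(\<lambda>n. \<psi> (n div 2)) \<in> O(\<psi>)"
proof -
  have div2: "filterlim (\<lambda>n::nat. n div 2) at_top at_top"
    by real_asymp
  have even: "filterlim (\<lambda>n::nat. 2 * (n div 2)) at_top at_top"
    by real_asymp
  have "eventually (\<lambda>n::nat. n \<le> 2 * (2 * (n div 2))) at_top"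
    by (rule eventually_mono[OF eventually_ge_at_top[of 2]]) presburger
  then have quadruple: "(\<lambda>n. \<psi> (2 * (2 * (n div 2)))) \<in> O(\<psi>)"
    by (rule bigo_comp_larger_of_decreasing[OF pos dec filterlim_ident])
  have "(\<lambda>n. \<psi> (n div 2)) \<in> O(\<lambda>n. \<psi> (2 * (n div 2)))"
    using landau_o.big.compose[OF doubling div2] .
  also have "(\<lambda>n. \<psi> (2 * (n div 2))) \<in> O(\<lambda>n. \<psi> (2 * (2 * (n div 2))))"
    using landau_o.big.compose[OF doubling even] .
  also note quadruple
  finally show ?thesis .
qed

lemma bigo_log_weight:
  fixes a \<psi> :: "nat \<Rightarrow> real"
  assumes "(\<lambda>n. a n * ln (real n)) \<in> O(\<psi>)"
  shows "(\<lambda>n. a n * (1 + ln pi + ln (real n))) \<in> O(\<psi>)"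
proof -
  have "(\<lambda>n::nat. 1 + ln pi + ln (real n)) \<in> O(\<lambda>n. ln (real n))"
    by real_asymp
  from landau_o.big.mult_left[OF this] show ?thesis
    using assms by (rule landau_o.big_trans)
qed

lemma bigo_log_weight_double:
  fixes a \<psi> :: "nat \<Rightarrow> real"
  assumes a: "(\<lambda>n. a n * ln (real n)) \<in> O(\<psi>)"
    and pos: "\<forall>n\<ge>1. 0 < \<psi> n" and dec: "\<forall>n\<ge>1. \<psi> (Suc n) \<le> \<psi> n"
  shows "(\<lambda>n. a (2 * n) * (1 + ln pi + ln (real n))) \<in> O(\<psi>)"
proof -
  have double: "filterlim (\<lambda>n::nat. 2 * n) at_top at_top"
    by real_asymp
  have "(\<lambda>n::nat. 1 + ln pi + ln (real n)) \<in> O(\<lambda>n. ln (real (2 * n)))"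
    by real_asymp
  then have "(\<lambda>n. a (2 * n) * (1 + ln pi + ln (real n))) \<in> O(\<lambda>n. a (2 * n) * ln (real (2 * n)))"
    by (rule landau_o.big.mult_left)
  also have "(\<lambda>n. a (2 * n) * ln (real (2 * n))) \<in> O(\<lambda>n. \<psi> (2 * n))"
    using landau_o.big.compose[OF a double] .
  also have "(\<lambda>n. \<psi> (2 * n)) \<in> O(\<psi>)"
    by (intro bigo_comp_larger_of_decreasing pos dec filterlim_ident) auto
  finally show ?thesis .
qed

lemma best_approx_bigo_of_partial_sum_error_bigo:
  assumes "(\<lambda>n. L_norm (\<lambda>x. f x - partial_sum f n x)) \<in> O[F](g)"
  shows "(\<lambda>n. best_approx f n) \<in> O[F](g)"
proof -
  have "(\<lambda>n. best_approx f n) \<in> O[F](\<lambda>n. L_norm (\<lambda>x. f x - partial_sum f n x))"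
    by (intro landau_o.big_mono always_eventually allI)
      (simp add: best_approx_nonneg best_approx_le_partial_sum_error L_norm_nonneg)
  then show ?thesis
    using assms by (rule landau_o.big_trans)
qed

lemma log_coeff_bigo_of_partial_sum_error_bigo:
  fixes \<psi> :: "nat \<Rightarrow> real"
  assumes f: "f absolutely_integrable_on {-pi..pi}" and s: "\<bar>s\<bar> = 1"
    and nbvs: "NBVS (\<lambda>n. fourier_coeff f (s * int n))"
    and err: "(\<lambda>n. L_norm (\<lambda>x. f x - partial_sum f n x)) \<in> O(\<psi>)"
    and pos: "\<forall>n\<ge>1. 0 < \<psi> n" and dec: "\<forall>n\<ge>1. \<psi> (Suc n) \<le> \<psi> n"
    and half: "(\<lambda>n. \<psi> (n div 2)) \<in> O(\<psi>)"
  shows "(\<lambda>n. norm (fourier_coeff f (s * int n)) * ln (real n)) \<in> O(\<psi>)"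
proof -
  define d where "d n = fourier_coeff f (s * int n)" for n
  obtain \<theta> K where \<theta>: "0 \<le> \<theta>" "\<theta> < pi / 2" and sector: "\<forall>n\<ge>1. d n \<in> sector \<theta>"
    and K: "0 < K" "dyadic_variation_le K d"
    using NBVS_E[OF nbvs] unfolding d_def[abs_def] by metis
  have tail: "harmonic_tail d \<in> O(\<psi>)"
    using harmonic_tail_bigo_partial_sum_error[OF f s sector[unfolded d_def] \<theta>] err
    unfolding d_def[abs_def] by (rule landau_o.big_trans)
  have div2: "filterlim (\<lambda>n::nat. n div 2) at_top at_top"
    by real_asymp
  have even: "filterlim (\<lambda>n::nat. 2 * (n div 2)) at_top at_top"
    by real_asymp
  have tail_half: "(\<lambda>n. harmonic_tail d (n div 2)) \<in> O(\<psi>)"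
    using landau_o.big_trans[OF landau_o.big.compose[OF tail div2] half] .
  have "(\<lambda>n. harmonic_tail d (2 * (n div 2))) \<in> O(\<lambda>n. \<psi> (2 * (n div 2)))"
    using landau_o.big.compose[OF tail even] .
  also have "(\<lambda>n. \<psi> (2 * (n div 2))) \<in> O(\<lambda>n. \<psi> (n div 2))"
    by (intro bigo_comp_larger_of_decreasing pos dec div2) auto
  finally have tail_double: "(\<lambda>n. harmonic_tail d (2 * (n div 2))) \<in> O(\<psi>)"
    using half by (rule landau_o.big_trans)
  have "(\<lambda>n. norm (d n) * ln (real n)) \<in>
      O(\<lambda>n. harmonic_tail d (n div 2) + 2 * harmonic_tail d (2 * (n div 2)))"
    using K by (intro norm_mult_ln_bigo_harmonic_tail) auto
  also have "(\<lambda>n. harmonic_tail d (n div 2) + 2 * harmonic_tail d (2 * (n div 2))) \<in> O(\<psi>)"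
    using tail_half tail_double by (intro sum_in_bigo) simp_all
  finally show ?thesis
    unfolding d_def .
qed

lemma partial_sum_error_bigo_of_best_approx_bigo:
  fixes \<psi> :: "nat \<Rightarrow> real"
  assumes f: "f absolutely_integrable_on {-pi..pi}"
    and nbvs_pos: "NBVS (\<lambda>n. fourier_coeff f (int n))" and nbvs_neg: "NBVS (\<lambda>n. fourier_coeff f (- int n))"
    and best: "(\<lambda>n. best_approx f n) \<in> O(\<psi>)"
    and coeff_pos: "(\<lambda>n. norm (fourier_coeff f (int n)) * ln (real n)) \<in> O(\<psi>)"
    and coeff_neg: "(\<lambda>n. norm (fourier_coeff f (- int n)) * ln (real n)) \<in> O(\<psi>)"
    and pos: "\<forall>n\<ge>1. 0 < \<psi> n" and dec: "\<forall>n\<ge>1. \<psi> (Suc n) \<le> \<psi> n"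
  shows "(\<lambda>n. L_norm (\<lambda>x. f x - partial_sum f n x)) \<in> O(\<psi>)"
proof -
  obtain Kp Km where Kp: "dyadic_variation_le Kp (\<lambda>n. fourier_coeff f (int n))" "0 < Kp"
    and Km: "dyadic_variation_le Km (\<lambda>n. fourier_coeff f (- int n))" "0 < Km"
    using NBVS_E[OF nbvs_pos] NBVS_E[OF nbvs_neg] by metis
  define cp where "cp n = norm (fourier_coeff f (int n))" for n
  define cm where "cm n = norm (fourier_coeff f (- int n))" for n
  define w where "w n = 1 + ln pi + ln (real n)" for n :: nat
  define R where "R n = 4 * best_approx f n + 16 * (1 + 2 * Kp) * (cp n * w n) +
    16 * (1 + 2 * Kp) * (cp (2 * n) * w n) + 16 * (1 + 2 * Km) * (cm n * w n) +
    16 * (1 + 2 * Km) * (cm (2 * n) * w n)" for n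
  have "(\<lambda>n. L_norm (\<lambda>x. f x - partial_sum f n x)) \<in> O(R)"
  proof (rule landau_o.big_mono)
    show "eventually (\<lambda>n. norm (L_norm (\<lambda>x. f x - partial_sum f n x)) \<le> norm (R n)) at_top"
      using eventually_ge_at_top[of 1]
    proof eventually_elim
      case (elim n)
      have "0 \<le> w n"
        using elim ln_ge_zero[of pi] pi_ge_two by (simp add: w_def)
      then have "0 \<le> R n"
        using Kp Km by (simp add: R_def cp_def cm_def best_approx_nonneg)
      moreover have "L_norm (\<lambda>x. f x - partial_sum f n x) \<le> R n"
        using partial_sum_error_le[OF f Kp(1) _ Km(1) _ elim] Kp Km
        by (simp add: R_def cp_def cm_def w_def algebra_simps)
      ultimately show ?case
        by (simp add: L_norm_nonneg)
    qed
  qed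
  also have "R \<in> O(\<psi>)"
  proof -
    have "(\<lambda>n. cp n * w n) \<in> O(\<psi>)" "(\<lambda>n. cp (2 * n) * w n) \<in> O(\<psi>)"
      "(\<lambda>n. cm n * w n) \<in> O(\<psi>)" "(\<lambda>n. cm (2 * n) * w n) \<in> O(\<psi>)"
      using bigo_log_weight[of cp] bigo_log_weight_double[of cp, OF _ pos dec]
        bigo_log_weight[of cm] bigo_log_weight_double[of cm, OF _ pos dec] coeff_pos coeff_neg
      by (simp_all add: cp_def cm_def w_def)
    then show ?thesis
      using Kp(2) Km(2) unfolding R_def by (intro sum_in_bigo) (simp_all add: best)
  qed
  finally show ?thesis .
qed

theorem theorem6:
  fixes f :: "real \<Rightarrow> complex" and \<psi> :: "nat \<Rightarrow> real"
  assumes f: "in_L2pi f"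
    and \<psi>_pos: "\<forall>n\<ge>1. \<psi> n > 0"
    and \<psi>_dec: "\<forall>n\<ge>1. \<psi> (Suc n) \<le> \<psi> n"
    and \<psi>_lim: "\<psi> \<longlonglongrightarrow> 0"
    and \<psi>_doub: "(\<lambda>n. \<psi> n) \<in> O(\<lambda>n. \<psi> (2 * n))"
    and nb_pos: "NBVS (\<lambda>n. fourier_coeff f (int n))"
    and nb_neg: "NBVS (\<lambda>n. fourier_coeff f (- int n))"
  shows "(\<lambda>n. L_norm (\<lambda>x. f x - partial_sum f n x)) \<in> O(\<psi>) \<longleftrightarrow>
         ((\<lambda>n. best_approx f n) \<in> O(\<psi>) \<and>
          (\<lambda>n::int. norm (fourier_coeff f n) * ln \<bar>real_of_int n\<bar>) \<in> O[cofinite](\<lambda>n. \<psi> (nat \<bar>n\<bar>)))"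
proof -
  have f_int: "f absolutely_integrable_on {-pi..pi}"
    using f by (simp add: in_L2pi_def)
  have half: "(\<lambda>n. \<psi> (n div 2)) \<in> O(\<psi>)"
    using \<psi>_pos \<psi>_dec \<psi>_doub by (rule bigo_div2_of_doubling)
  have coeffs: "(\<lambda>n::int. norm (fourier_coeff f n) * ln \<bar>real_of_int n\<bar>) \<in> O[cofinite](\<lambda>n. \<psi> (nat \<bar>n\<bar>)) \<longleftrightarrow>
      (\<lambda>n. norm (fourier_coeff f (int n)) * ln (real n)) \<in> O(\<psi>) \<and>
      (\<lambda>n. norm (fourier_coeff f (- int n)) * ln (real n)) \<in> O(\<psi>)"
    by (simp add: bigo_cofinite_int_iff)
  have necessity: "(\<lambda>n. norm (fourier_coeff f (int n)) * ln (real n)) \<in> O(\<psi>) \<and>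
      (\<lambda>n. norm (fourier_coeff f (- int n)) * ln (real n)) \<in> O(\<psi>)"
    if err: "(\<lambda>n. L_norm (\<lambda>x. f x - partial_sum f n x)) \<in> O(\<psi>)"
    using log_coeff_bigo_of_partial_sum_error_bigo[OF f_int _ _ err \<psi>_pos \<psi>_dec half, of 1]
      log_coeff_bigo_of_partial_sum_error_bigo[OF f_int _ _ err \<psi>_pos \<psi>_dec half, of "- 1"] nb_pos nb_neg
    by simp
  show ?thesis
    unfolding coeffs
    using best_approx_bigo_of_partial_sum_error_bigo necessity
      partial_sum_error_bigo_of_best_approx_bigo[OF f_int nb_pos nb_neg _ _ _ \<psi>_pos \<psi>_dec]
    by blast
qed

end
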